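(* Let $f_0,\dots,f_n$ be meromorphic functions. For all $x\in\mathbb{C}$ with $|x|>\mathcal{R}(n,q)$ and every choice $\delta_0,\dots,\delta_{n-1}\in\{1,-1\}$, $$\mathcal{W}(f_0,\dots,f_n)(x)=\det\big(\eta_q^{\delta_i(n-i)}\mathcal{D}_q^if_j\big)_{0\le i,j\le n}(x)$$ (with $\delta_n(n-n)=0$, so the last row is $\mathcal{D}_q^nf_j$), and $$\mathcal{W}(f_0,\dots,f_n)(x)=\det\big(\eta_q^{n-2i}f_j\big)_{0\le i,j\le n}(x)\cdot\prod_{i=1}^{n}\prod_{j=1}^{i}\frac{-1}{\eta_q^{i-2j+2}x-\eta_q^{i-2j}x}.$$
   Context: Fix $q\in\mathbb{C}$ with $0<|q|<1$. Every $x\in\mathbb{C}$ is written uniquely as $x=\frac{z+z^{-1}}{2}$ with $|z|\ge 1$ (when $|z|=1$, $z=x+i\sqrt{1-x^2}$). $(\eta_q f)(x)=f\big(\tfrac{q^{1/2}z+q^{-1/2}z^{-1}}{2}\big)$, $(\eta_q^{-1}f)(x)=f\big(\tfrac{q^{-1/2}z+q^{1/2}z^{-1}}{2}\big)$, $\eta_q^0f=f$, $\eta_q^{k}=\eta_q\circ\eta_q^{k-1}$, $\eta_q^{-k}=\eta_q^{-1}\circ\eta_q^{-(k-1)}$; $(\eta_{q^{\pm k}}f)(x)=f\big(\tfrac{q^{\pm k/2}z+q^{\mp k/2}z^{-1}}{2}\big)$; $\eta_q^kx$ denotes $\eta_q^k$ applied to the identity map. $\mathcal{R}(n,q)>0$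 is a constant such that for $|x|>\mathcal{R}(n,q)$ (e.g. whenever $|z|>|q|^{-n/2}$) one has $\eta_q^{\pm k}f=\eta_{q^{\pm k}}f$ for $0\le k\le n$ and $\eta_q^{-m_1}\eta_q^{m_2}=\eta_q^{m_2}\eta_q^{-m_1}=\eta_q^{m_2-m_1}$ for $0\le m_1,m_2\le n$. Askey-Wilson operator $(\mathcal{D}_qf)(x)=\frac{(\eta_qf)(x)-(\eta_q^{-1}f)(x)}{\eta_qx-\eta_q^{-1}x}$ ($x\ne\pm1$; limit at $\pm1$), $\mathcal{D}_q^0f=f$, $\mathcal{D}_q^k=\mathcal{D}_q\circ\mathcal{D}_q^{k-1}$; $(\mathcal{A}_{q^k}f)(x)=\frac{(\eta_{q^k}f)(x)+(\eta_{q^{-k}}f)(x)}{2}$, $\mathcal{A}_{q^0}f=f$. The Askey-Wilson Wronskian-Casorati determinant is $\mathcal{W}(f_0,\dots,f_n)(x)=\det\big(\mathcal{A}_{q^{n-i}}\mathcal{D}_q^{i}f_j\big)_{0\le i,j\le n}(x)$ (row index $i$, column index $j$). *)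

theory Defs
  imports "HOL-Complex_Analysis.Complex_Analysis" "Jordan_Normal_Form.Determinant"
begin

text \<open>Joukowski parametrisation: x = (z + 1/z)/2 with |z| \<ge> 1; on the cut [-1,1]
  (the only place where |z| = 1) the convention z = x + i sqrt(1 - x^2).\<close>
definition zOf :: "complex \<Rightarrow> complex" where
  "zOf x = (if x \<in> \<real> \<and> \<bar>Re x\<bar> \<le> 1 then x + \<i> * complex_of_real (sqrt (1 - (Re x)\<^sup>2))
            else (THE z. norm z \<ge> 1 \<and> x = (z + inverse z) / 2))"

definition qh :: "complex \<Rightarrow> complex" where "qh q = csqrt q"

definition eta :: "complex \<Rightarrow> (complex \<Rightarrow> complex) \<Rightarrow> complex \<Rightarrow> complex" where
  "eta q f x = f ((qh q * zOf x + inverse (qh q) * inverse (zOf x)) / 2)"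

definition etainv :: "complex \<Rightarrow> (complex \<Rightarrow> complex) \<Rightarrow> complex \<Rightarrow> complex" where
  "etainv q f x = f ((inverse (qh q) * zOf x + qh q * inverse (zOf x)) / 2)"

definition etaIt :: "complex \<Rightarrow> int \<Rightarrow> (complex \<Rightarrow> complex) \<Rightarrow> complex \<Rightarrow> complex" where
  "etaIt q k = (if k \<ge> 0 then eta q ^^ nat k else etainv q ^^ nat (- k))"

definition etaQ :: "complex \<Rightarrow> int \<Rightarrow> (complex \<Rightarrow> complex) \<Rightarrow> complex \<Rightarrow> complex" where
  "etaQ q k f x = f ((qh q powi k * zOf x + qh q powi (- k) * inverse (zOf x)) / 2)"

definition avg :: "complex \<Rightarrow> nat \<Rightarrow> (complex \<Rightarrow> complex) \<Rightarrow> complex \<Rightarrow> complex" where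
  "avg q k f x = (if k = 0 then f x else (etaQ q (int k) f x + etaQ q (- int k) f x) / 2)"

definition AWD :: "complex \<Rightarrow> (complex \<Rightarrow> complex) \<Rightarrow> complex \<Rightarrow> complex" where
  "AWD q f x = (if x = 1 \<or> x = -1
     then Lim (at x) (\<lambda>y. (eta q f y - etainv q f y) / (eta q (\<lambda>t. t) y - etainv q (\<lambda>t. t) y))
     else (eta q f x - etainv q f x) / (eta q (\<lambda>t. t) x - etainv q (\<lambda>t. t) x))"

definition AWDpow :: "complex \<Rightarrow> nat \<Rightarrow> (complex \<Rightarrow> complex) \<Rightarrow> complex \<Rightarrow> complex" where
  "AWDpow q k = AWD q ^^ k"

definition AWW :: "complex \<Rightarrow> nat \<Rightarrow> (nat \<Rightarrow> complex \<Rightarrow> complex) \<Rightarrow> complex \<Rightarrow> complex" where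
  "AWW q n f x = det (mat (n+1) (n+1) (\<lambda>(i,j). avg q (n - i) (AWDpow q i (f j)) x))"

text \<open>The constant R(n,q): |x| > R(n,q) forces |z| > |q|^(-n/2) (since |x| \<le> |z|).\<close>
definition RR :: "nat \<Rightarrow> complex \<Rightarrow> real" where
  "RR n q = norm q powr (- real n / 2)"

end

theory Submission
  imports Defs
begin

text \<open>
  Put p = q^(1/2) and write x = (z + 1/z)/2 with p^n z outside the unit disc. On the nodes
  x_t = (p^t z + p^(-t)/z)/2, t \<le> n, the operator eta_q acts as the shift t \<mapsto> t + 1 and the
  Askey-Wilson operator as the divided difference (g(x_(t+1)) - g(x_(t-1))) / (x_(t+1) - x_(t-1)).
  Every entry of the matrices in question is therefore a value of D_q^i f_j at a node, and the
  only relation needed is D^i f(x_(t-1)) = D^i f(x_(t+1)) - (x_(t+1) - x_(t-1)) D^(i+1) f(x_t).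
  It lets row i move between the nodes n-i, n-i-2, ..., -(n-i): the correction is a row of
  level i+1 which, once the rows below have been normalised, repeats row i+1. Applied to
  consecutive rows of (f_j(x_(n-2i))) the same relation lifts the rows one level at a time, each
  step contributing a factor -(x_(t+1) - x_(t-1)).
\<close>

section \<open>Determinants of families of rows\<close>

definition det_of_rows :: "nat \<Rightarrow> (nat \<Rightarrow> nat \<Rightarrow> 'a::comm_ring_1) \<Rightarrow> 'a" where
  "det_of_rows N R = det (mat N N (\<lambda>(i, j). R i j))"

lemma det_of_rows_cong:
  "(\<And>i. i < N \<Longrightarrow> R i = R' i) \<Longrightarrow> det_of_rows N R = det_of_rows N R'"
  unfolding det_of_rows_def by (intro arg_cong[where f = det] eq_matI) auto

lemma det_of_rows_linear_row:
  assumes "k < N" and "R k = (\<lambda>j. a * x j + b * y j)"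
  shows "det_of_rows N R = a * det_of_rows N (R(k := x)) + b * det_of_rows N (R(k := y))"
proof -
  let ?term = "\<lambda>S p. \<Prod>i = 0..<N. mat N N (\<lambda>(i, j). S i j) $$ (i, p i)"
  have "?term R p = a * ?term (R(k := x)) p + b * ?term (R(k := y)) p"
    if p: "p permutes {0..<N}" for p
  proof -
    have p_less: "i < N \<Longrightarrow> p i < N" for i
      using p by (metis atLeastLessThan_iff permutes_in_image zero_le)
    have split: "?term (R(k := s)) p = s (p k) * (\<Prod>i\<in>{0..<N} - {k}. R i (p i))" for s
    proof -
      have "?term (R(k := s)) p
          = s (p k) * (\<Prod>i\<in>{0..<N} - {k}. mat N N (\<lambda>(i, j). (R(k := s)) i j) $$ (i, p i))"
        using assms p_less by (simp add: prod.remove[of "{0..<N}" k])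
      also have "(\<Prod>i\<in>{0..<N} - {k}. mat N N (\<lambda>(i, j). (R(k := s)) i j) $$ (i, p i))
          = (\<Prod>i\<in>{0..<N} - {k}. R i (p i))"
        using p_less by (intro prod.cong) auto
      finally show ?thesis .
    qed
    have "?term R p = ?term (R(k := R k)) p"
      by simp
    also have "\<dots> = (a * x (p k) + b * y (p k)) * (\<Prod>i\<in>{0..<N} - {k}. R i (p i))"
      unfolding split assms(2) ..
    also have "\<dots> = a * ?term (R(k := x)) p + b * ?term (R(k := y)) p"
      unfolding split by (simp add: algebra_simps)
    finally show ?thesis .
  qed
  then show ?thesis
    unfolding det_of_rows_def det_def by (simp add: sum_distrib_left sum.distrib algebra_simps)
qed

lemma det_of_rows_diff_row:
  "k < N \<Longrightarrow> R k = (\<lambda>j. x j - b * y j)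
     \<Longrightarrow> det_of_rows N R = det_of_rows N (R(k := x)) - b * det_of_rows N (R(k := y))"
  using det_of_rows_linear_row[of k N R 1 x "- b" y] by simp

lemma det_of_rows_identical_rows:
  "i < N \<Longrightarrow> l < N \<Longrightarrow> i \<noteq> l \<Longrightarrow> R i = R l \<Longrightarrow> det_of_rows N R = 0"
  unfolding det_of_rows_def by (rule det_identical_rows[of _ N i l]) auto

section \<open>Divided-difference tables\<close>

text \<open>In the application v i t is the row (D_q^i f_j(x_t))_j and c t = x_(t+1) - x_(t-1).\<close>

locale divided_difference_table =
  fixes n :: nat and v :: "nat \<Rightarrow> int \<Rightarrow> nat \<Rightarrow> 'a::comm_ring_1" and c :: "int \<Rightarrow> 'a"
  assumes recurrence:
    "i < n \<Longrightarrow> \<bar>t\<bar> < int n \<Longrightarrow> v i (t - 1) = (\<lambda>j. v i (t + 1) j - c t * v (Suc i) t j)"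
begin

definition admissible_shifts :: "nat \<Rightarrow> int set" where
  "admissible_shifts i = {int n - int i - 2 * int m | m. m \<le> n - i}"

definition top_row :: "nat \<Rightarrow> nat \<Rightarrow> 'a" where
  "top_row i = v i (int n - int i)"

lemma det_replace_admissible_row:
  assumes "k \<le> n" and "t \<in> admissible_shifts k" and "\<forall>i. k < i \<and> i \<le> n \<longrightarrow> R i = top_row i"
  shows "det_of_rows (Suc n) (R(k := v k t)) = det_of_rows (Suc n) (R(k := top_row k))"
  using assms
proof (induction "n - k" arbitrary: k R t)
  case 0
  then have "k = n" by simp
  moreover from this have "t = 0"
    using "0.prems"(2) unfolding admissible_shifts_def by simp
  ultimately show ?case by (simp add: top_row_def)
next
  case (Suc d)
  then have k: "k < n" and d: "d = n - Suc k" by simp_all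
  note outer_IH = Suc.hyps(1)[OF d] and rows_below = Suc.prems(3)
  from Suc.prems(2) obtain m where m: "m \<le> n - k" "t = int n - int k - 2 * int m"
    unfolding admissible_shifts_def by blast
  have "det_of_rows (Suc n) (R(k := v k (int n - int k - 2 * int m)))
      = det_of_rows (Suc n) (R(k := top_row k))"
    using m(1)
  proof (induction m)
    case 0
    then show ?case by (simp add: top_row_def)
  next
    case (Suc m)
    define u where "u = int n - int k - 2 * int m - 1"
    have u_bound: "\<bar>u\<bar> < int n" and u_adm: "u \<in> admissible_shifts (Suc k)"
      using Suc.prems k unfolding u_def admissible_shifts_def by (auto intro!: exI[of _ m])
    let ?R' = "R(k := v (Suc k) u)"
    \<comment> \<open>by the outer induction hypothesis row k+1 may be moved to shift u, where it repeats row k\<close>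
    have "det_of_rows (Suc n) ?R' = det_of_rows (Suc n) (?R'(Suc k := v (Suc k) u))"
      using rows_below k
      by (subst outer_IH[where R = ?R' and t = u])
        (auto intro!: arg_cong[where f = "det_of_rows _"] simp: u_adm)
    also have "\<dots> = 0"
      using k by (intro det_of_rows_identical_rows[of k _ "Suc k"]) auto
    finally have zero: "det_of_rows (Suc n) ?R' = 0" .
    have u_plus: "u + 1 = int n - int k - 2 * int m"
      and u_minus: "u - 1 = int n - int k - 2 * int (Suc m)"
      unfolding u_def by simp_all
    have "det_of_rows (Suc n) (R(k := v k (u - 1)))
        = det_of_rows (Suc n) (R(k := v k (u + 1))) - c u * det_of_rows (Suc n) ?R'"
      using k recurrence[OF k u_bound] by (subst det_of_rows_diff_row[where k = k]) auto
    then show ?case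
      unfolding zero u_plus u_minus Suc.IH[OF Suc_leD[OF Suc.prems]] by (simp add: fun_upd_def)
  qed
  then show ?case using m(2) by simp
qed

lemma det_affine_admissible_rows:
  assumes "\<forall>i\<le>n. s i \<in> admissible_shifts i \<and> s' i \<in> admissible_shifts i \<and> a i + b i = 1"
  shows "det_of_rows (Suc n) (\<lambda>i j. a i * v i (s i) j + b i * v i (s' i) j)
           = det_of_rows (Suc n) top_row"
proof -
  let ?A = "\<lambda>i j. a i * v i (s i) j + b i * v i (s' i) j"
  have prefix: "det_of_rows (Suc n) (\<lambda>i. if i < k then ?A i else top_row i)
      = det_of_rows (Suc n) top_row" if "k \<le> Suc n" for k
    using that
  proof (induction k)
    case 0
    show ?case by simp
  next
    case (Suc k)
    let ?M = "\<lambda>i. if i < k then ?A i else top_row i"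
    have k: "k \<le> n" using Suc.prems by simp
    have below: "\<forall>i. k < i \<and> i \<le> n \<longrightarrow> ?M i = top_row i" by simp
    have "(\<lambda>i. if i < Suc k then ?A i else top_row i) = ?M(k := ?A k)"
      by (auto simp: fun_eq_iff less_Suc_eq)
    then have "det_of_rows (Suc n) (\<lambda>i. if i < Suc k then ?A i else top_row i)
        = a k * det_of_rows (Suc n) (?M(k := v k (s k)))
          + b k * det_of_rows (Suc n) (?M(k := v k (s' k)))"
      using k by (simp add: det_of_rows_linear_row[where k = k])
    also have "\<dots> = det_of_rows (Suc n) (?M(k := top_row k))"
      using assms k below by (simp add: det_replace_admissible_row flip: distrib_right)
    also have "?M(k := top_row k) = ?M"
      by auto
    finally show ?case
      using assms k Suc.IH by simp
  qed
  have "det_of_rows (Suc n) ?A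
      = det_of_rows (Suc n) (\<lambda>i. if i < Suc n then ?A i else top_row i)"
    by (rule det_of_rows_cong) simp
  with prefix[of "Suc n"] show ?thesis by simp
qed

corollary det_admissible_rows:
  "\<forall>i\<le>n. s i \<in> admissible_shifts i
     \<Longrightarrow> det_of_rows (Suc n) (\<lambda>i. v i (s i)) = det_of_rows (Suc n) top_row"
  using det_affine_admissible_rows[of s s "\<lambda>_. 1" "\<lambda>_. 0"] by simp

definition staircase :: "nat \<Rightarrow> nat \<Rightarrow> nat \<Rightarrow> nat \<Rightarrow> 'a" where
  "staircase k l i =
     (if i < k then top_row i
      else if i \<le> l then v k (int n + int k - 2 * int i)
      else v (Suc k) (int n + int (Suc k) - 2 * int i))"

lemma det_staircase_step:
  assumes "k < l" and "l \<le> n"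
  shows "det_of_rows (Suc n) (staircase k l)
           = - c (int n + int k - 2 * int l + 1) * det_of_rows (Suc n) (staircase k (l - 1))"
proof -
  define u where "u = int n + int k - 2 * int l + 1"
  have k: "k < n" and u_bound: "\<bar>u\<bar> < int n"
    using assms unfolding u_def by auto
  have "staircase k l l = v k (u - 1)"
    using assms unfolding u_def staircase_def by auto
  then have "det_of_rows (Suc n) (staircase k l)
      = det_of_rows (Suc n) ((staircase k l)(l := v k (u + 1)))
        - c u * det_of_rows (Suc n) ((staircase k l)(l := v (Suc k) u))"
    using assms recurrence[OF k u_bound] by (intro det_of_rows_diff_row) auto
  also have "det_of_rows (Suc n) ((staircase k l)(l := v k (u + 1))) = 0"
    using assms
    by (intro det_of_rows_identical_rows[of l _ "l - 1"])
      (auto simp: staircase_def u_def algebra_simps)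
  also have "(staircase k l)(l := v (Suc k) u) = staircase k (l - 1)"
    using assms unfolding staircase_def u_def by (auto simp: fun_eq_iff algebra_simps)
  finally show ?thesis
    unfolding u_def by simp
qed

lemma det_staircase_descend:
  "j \<le> n - k \<Longrightarrow> det_of_rows (Suc n) (staircase k (k + j))
     = (\<Prod>i=1..j. - c (int n - int k - 2 * int i + 1)) * det_of_rows (Suc n) (staircase k k)"
proof (induction j)
  case 0
  then show ?case by simp
next
  case (Suc j)
  then show ?case
    using det_staircase_step[of k "k + Suc j"] by (simp add: algebra_simps)
qed

lemma det_staircase:
  "k \<le> n \<Longrightarrow> det_of_rows (Suc n) (staircase k n)
     = (\<Prod>m=1..n-k. \<Prod>j=1..m. - c (int m - 2 * int j + 1)) * det_of_rows (Suc n) top_row"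
proof (induction "n - k" arbitrary: k)
  case 0
  then have "k = n" by simp
  then show ?case
    by (auto simp: staircase_def top_row_def less_Suc_eq intro!: det_of_rows_cong)
next
  case (Suc d)
  then have k: "k < n" and n_k: "n - k = Suc (n - Suc k)" by simp_all
  have "det_of_rows (Suc n) (staircase k n)
      = (\<Prod>i=1..n-k. - c (int (n - k) - 2 * int i + 1)) * det_of_rows (Suc n) (staircase k k)"
    using det_staircase_descend[of "n - k" k] k by (simp add: of_nat_diff)
  also have "det_of_rows (Suc n) (staircase k k) = det_of_rows (Suc n) (staircase (Suc k) n)"
    by (auto simp: staircase_def top_row_def less_Suc_eq intro!: det_of_rows_cong)
  also have "\<dots> = (\<Prod>m=1..n - Suc k. \<Prod>j=1..m. - c (int m - 2 * int j + 1))
      * det_of_rows (Suc n) top_row"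
    using Suc.hyps(1)[of "Suc k"] Suc.hyps(2) k by simp
  finally show ?case
    unfolding n_k by (simp add: mult_ac)
qed

lemma det_shifted_rows:
  "det_of_rows (Suc n) (\<lambda>i. v 0 (int n - 2 * int i))
     = (\<Prod>m=1..n. \<Prod>j=1..m. - c (int m - 2 * int j + 1)) * det_of_rows (Suc n) top_row"
proof -
  have "det_of_rows (Suc n) (\<lambda>i. v 0 (int n - 2 * int i)) = det_of_rows (Suc n) (staircase 0 n)"
    by (rule det_of_rows_cong) (simp add: staircase_def)
  then show ?thesis
    using det_staircase[of 0] by simp
qed

end

section \<open>The Joukowski map\<close>

definition joukowski :: "complex \<Rightarrow> complex" where
  "joukowski w = (w + inverse w) / 2"

lemma joukowski_inverse [simp]: "joukowski (inverse w) = joukowski w"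
  unfolding joukowski_def by (simp add: add.commute)

lemma norm_joukowski_le:
  assumes "1 \<le> norm w"
  shows "norm (joukowski w) \<le> norm w"
proof -
  have "norm (inverse w) \<le> norm w"
    using assms by (simp add: norm_inverse inverse_le_1_iff order.trans[OF _ assms])
  then show ?thesis
    unfolding joukowski_def using norm_triangle_ineq[of w "inverse w"] by simp
qed

lemma joukowski_not_in_segment:
  assumes "1 < norm w"
  shows "\<not> (joukowski w \<in> \<real> \<and> \<bar>Re (joukowski w)\<bar> \<le> 1)"
proof
  assume segment: "joukowski w \<in> \<real> \<and> \<bar>Re (joukowski w)\<bar> \<le> 1"
  have "Im (joukowski w) = (Im w + Im (inverse w)) / 2"
    unfolding joukowski_def by (simp del: inverse_complex.sel)
  also have "Im (inverse w) = - Im w / (norm w)\<^sup>2"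
    by (simp add: cmod_power2 add.commute)
  also have "(Im w + - Im w / (norm w)\<^sup>2) / 2 = Im w * (1 - 1 / (norm w)\<^sup>2) / 2"
    by (simp add: algebra_simps)
  finally have "Im (joukowski w) = Im w * (1 - 1 / (norm w)\<^sup>2) / 2" .
  moreover have "1 - 1 / (norm w)\<^sup>2 \<noteq> 0"
    using less_1_mult[OF assms assms] by (simp add: power2_eq_square)
  ultimately have "Im w = 0"
    using segment by (auto simp: complex_is_Real_iff)
  then obtain r where w: "w = complex_of_real r"
    by (metis complex_is_Real_iff of_real_Re)
  have r: "1 < \<bar>r\<bar>"
    using assms unfolding w by simp
  have "r * r \<noteq> 1"
    using less_1_mult[OF r r] by (simp add: abs_mult_self_eq)
  then have "r - 1 / r \<noteq> 0"
    using r by (auto simp: field_simps)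
  then have "4 < (r - 1 / r)\<^sup>2 + 4"
    by simp
  also have "\<dots> = (r + 1 / r)\<^sup>2"
    using r by (auto simp: power2_eq_square field_simps)
  also have "r + 1 / r = 2 * Re (joukowski w)"
    unfolding w joukowski_def by (simp add: field_simps)
  also have "(2 * Re (joukowski w))\<^sup>2 \<le> 4"
    using segment abs_square_le_1[of "Re (joukowski w)"] by (simp add: power_mult_distrib)
  finally show False
    by simp
qed

lemma joukowski_inj_outside_disc:
  assumes z: "1 \<le> norm z" and w: "1 < norm w" and eq: "joukowski z = joukowski w"
  shows "z = w"
proof -
  have "z \<noteq> 0" "w \<noteq> 0"
    using z w by auto
  then have "2 * (joukowski z - joukowski w) = (z - w) * (1 - inverse (z * w))"
    unfolding joukowski_def by (simp add: field_simps)
  then have "(z - w) * (1 - inverse (z * w)) = 0"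
    using eq by simp
  moreover have "1 < norm (z * w)"
    using mult_le_less_imp_less[OF z w] by (simp add: norm_mult)
  then have "1 - inverse (z * w) \<noteq> 0"
    by (metis inverse_1 inverse_inverse_eq norm_one order.irrefl right_minus_eq)
  ultimately show ?thesis
    by simp
qed

lemma zOf_joukowski:
  assumes "1 < norm w"
  shows "zOf (joukowski w) = w"
proof -
  have "(THE z. 1 \<le> norm z \<and> joukowski w = (z + inverse z) / 2) = w"
    using assms joukowski_inj_outside_disc[OF _ assms]
    by (intro the_equality) (auto simp: joukowski_def)
  then show ?thesis
    unfolding zOf_def if_not_P[OF joukowski_not_in_segment[OF assms]] .
qed

lemma joukowski_surj_outside_disc:
  assumes "1 < norm x"
  obtains w where "1 < norm w" and "joukowski w = x"
proof -
  define s where "s = csqrt (x\<^sup>2 - 1)"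
  define w where "w = x + s"
  have "w * (x - s) = x\<^sup>2 - s\<^sup>2"
    unfolding w_def by (simp add: power2_eq_square algebra_simps)
  also have "\<dots> = 1"
    unfolding s_def by simp
  finally have "inverse w = x - s" and "w \<noteq> 0"
    by (auto intro: inverse_unique)
  then have J: "joukowski w = x"
    unfolding joukowski_def w_def by simp
  obtain w' where w': "1 \<le> norm w'" "joukowski w' = x"
  proof (cases "1 \<le> norm w")
    case False
    then have "1 \<le> norm (inverse w)"
      using \<open>w \<noteq> 0\<close> by (simp add: norm_inverse one_le_inverse_iff)
    with J that show ?thesis by simp
  qed (use J in blast)
  moreover have "norm w' \<noteq> 1"
    using norm_joukowski_le[of w'] w' assms by auto
  ultimately show ?thesis
    using that by force
qed

lemma zOf_outside_disc:
  assumes "1 < norm x"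
  shows "1 < norm (zOf x)" and "joukowski (zOf x) = x"
  using joukowski_surj_outside_disc[OF assms] zOf_joukowski by metis+

lemma qh_squared: "qh q * qh q = q"
  unfolding qh_def by (metis power2_csqrt power2_eq_square)

lemma norm_qh: "norm (qh q) = sqrt (norm q)"
  unfolding qh_def by simp

lemma eta_joukowski:
  assumes "1 < norm w"
  shows "eta q g (joukowski w) = g (joukowski (qh q * w))"
  unfolding eta_def zOf_joukowski[OF assms] by (simp add: joukowski_def)

lemma etainv_joukowski:
  assumes "1 < norm w"
  shows "etainv q g (joukowski w) = g (joukowski (w / qh q))"
  unfolding etainv_def zOf_joukowski[OF assms] by (simp add: joukowski_def field_simps)

lemma etaQ_joukowski:
  assumes "1 < norm w"
  shows "etaQ q k g (joukowski w) = g (joukowski (qh q powi k * w))"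
  unfolding etaQ_def zOf_joukowski[OF assms] by (simp add: joukowski_def power_int_minus)

lemma avg_joukowski:
  "1 < norm w \<Longrightarrow> avg q k g (joukowski w)
     = (g (joukowski (qh q powi int k * w)) + g (joukowski (qh q powi (- int k) * w))) / 2"
  unfolding avg_def by (simp add: etaQ_joukowski)

lemma eta_funpow_joukowski:
  assumes "norm (qh q) \<le> 1" and "1 < norm (qh q ^ m * w)"
  shows "(eta q ^^ m) g (joukowski w) = g (joukowski (qh q ^ m * w))"
  using assms(2)
proof (induction m arbitrary: w)
  case 0
  then show ?case by simp
next
  case (Suc m)
  have "norm (qh q ^ Suc m) \<le> 1"
    using assms(1) by (metis norm_ge_zero norm_power power_le_one)
  then have "norm (qh q ^ Suc m * w) \<le> norm w"
    unfolding norm_mult by (intro mult_left_le_one_le) auto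
  then have "(eta q ^^ Suc m) g (joukowski w) = (eta q ^^ m) g (joukowski (qh q * w))"
    using Suc.prems by (simp add: eta_joukowski)
  also have "\<dots> = g (joukowski (qh q ^ m * (qh q * w)))"
    using Suc.prems by (intro Suc.IH) (simp add: mult_ac)
  finally show ?case
    by (simp add: mult_ac)
qed

lemma etainv_funpow_joukowski:
  assumes "qh q \<noteq> 0" and "norm (qh q) \<le> 1" and "1 < norm w"
  shows "(etainv q ^^ m) g (joukowski w) = g (joukowski (w / qh q ^ m))"
  using assms(3)
proof (induction m arbitrary: w)
  case 0
  then show ?case by simp
next
  case (Suc m)
  have "norm w \<le> norm (w / qh q)"
    using assms(1,2) by (simp add: norm_divide le_divide_eq mult_right_le_one_le)
  then have "(etainv q ^^ Suc m) g (joukowski w) = (etainv q ^^ m) g (joukowski (w / qh q))"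
    using Suc.prems by (simp add: etainv_joukowski Suc.IH)
  also have "\<dots> = g (joukowski (w / qh q ^ Suc m))"
    using Suc.IH \<open>norm w \<le> norm (w / qh q)\<close> Suc.prems by (simp add: field_simps)
  finally show ?case .
qed

lemma etaIt_joukowski:
  assumes "q \<noteq> 0" and "norm q \<le> 1" and "1 < norm w" and "1 < norm (qh q powi k * w)"
  shows "etaIt q k g (joukowski w) = g (joukowski (qh q powi k * w))"
proof -
  have p: "qh q \<noteq> 0" "norm (qh q) \<le> 1"
    using assms(1,2) by (auto simp: qh_def norm_qh)
  show ?thesis
  proof (cases "0 \<le> k")
    case True
    then show ?thesis
      using assms(4) eta_funpow_joukowski[OF p(2)] by (simp add: etaIt_def power_int_def)
  next
    case False
    then show ?thesis
      using assms(3) etainv_funpow_joukowski[OF p]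
      by (simp add: etaIt_def power_int_def power_inverse divide_inverse mult.commute)
  qed
qed

lemma AWD_joukowski:
  assumes "q \<noteq> 0" and "norm q \<le> 1" and "1 < norm (qh q * w)"
  shows "AWD q g (joukowski w)
           = (g (joukowski (qh q * w)) - g (joukowski (w / qh q)))
             / (joukowski (qh q * w) - joukowski (w / qh q))"
proof -
  have "norm (qh q * w) \<le> norm w"
    using assms(2) by (simp add: norm_mult norm_qh mult_left_le_one_le)
  then have w: "1 < norm w"
    using assms(3) by simp
  then have "joukowski w \<noteq> 1 \<and> joukowski w \<noteq> -1"
    using joukowski_not_in_segment by fastforce
  then show ?thesis
    unfolding AWD_def using w by (simp add: eta_joukowski etainv_joukowski)
qed

lemma joukowski_shift_diff_nonzero:
  assumes "q \<noteq> 0" and "q \<noteq> 1" and "1 < norm w"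
  shows "joukowski (qh q * w) - joukowski (w / qh q) \<noteq> 0"
proof -
  have p: "qh q \<noteq> 0"
    using assms(1) by (simp add: qh_def)
  have w: "w \<noteq> 0" and "w * w \<noteq> 1"
    using assms(3) less_1_mult[OF assms(3) assms(3)] by (auto simp flip: norm_mult)
  have "joukowski (qh q * w) - joukowski (w / qh q)
      = (qh q * qh q - 1) * (w * w - 1) / (2 * qh q * w)"
    using p w unfolding joukowski_def by (simp add: field_simps)
  then show ?thesis
    using assms(2) \<open>w * w \<noteq> 1\<close> p w by (simp add: qh_squared)
qed

lemma RR_eq:
  assumes "q \<noteq> 0"
  shows "RR n q = inverse (norm (qh q) ^ n)"
proof -
  have "norm (qh q) ^ n = (norm q powr (1 / 2)) powr real n"
    using assms by (simp add: norm_qh powr_half_sqrt powr_realpow)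
  also have "\<dots> = norm q powr (real n / 2)"
    by (simp add: powr_powr)
  finally show ?thesis
    unfolding RR_def by (simp add: powr_minus)
qed

lemma joukowski_param_beyond_RR:
  assumes "q \<noteq> 0" and "norm q \<le> 1" and "RR n q < norm x"
  obtains z where "1 < norm (qh q ^ n * z)" and "x = joukowski z"
proof -
  have p: "0 < norm (qh q)" "norm (qh q) \<le> 1"
    using assms(1,2) by (auto simp: qh_def norm_qh)
  then have "1 \<le> RR n q"
    using assms(1) by (simp add: RR_eq one_le_inverse_iff power_le_one)
  then have x: "1 < norm x"
    using assms(3) by simp
  have "inverse (norm (qh q) ^ n) < norm (zOf x)"
    using assms(1,3) norm_joukowski_le[of "zOf x"] zOf_outside_disc[OF x] by (simp add: RR_eq)
  then have "1 < norm (qh q ^ n * zOf x)"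
    using p by (simp add: norm_mult norm_power field_simps)
  with zOf_outside_disc(2)[OF x] that show ?thesis
    by simp
qed

section \<open>Askey-Wilson operators at the nodes\<close>

locale askey_wilson_nodes =
  fixes q :: complex and n :: nat and z :: complex
  assumes q_nonzero: "q \<noteq> 0" and norm_q_less_1: "norm q < 1"
    and param_beyond: "1 < norm (qh q ^ n * z)"
begin

text \<open>For t \<le> n, node t is the point x_t = eta_q^t x of the proof idea, with x = node 0.\<close>

definition node :: "int \<Rightarrow> complex" where
  "node t = joukowski (qh q powi t * z)"

lemma qh_nonzero: "qh q \<noteq> 0"
  using q_nonzero by (simp add: qh_def)

lemma norm_qh_le_1: "norm (qh q) \<le> 1"
  using norm_q_less_1 by (simp add: norm_qh)

lemma one_less_norm_param: "t \<le> int n \<Longrightarrow> 1 < norm (qh q powi t * z)"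
proof -
  assume "t \<le> int n"
  then have "norm (qh q) powi int n \<le> norm (qh q) powi t"
    using norm_qh_le_1 qh_nonzero by (intro power_int_decreasing) auto
  then have "norm (qh q ^ n * z) \<le> norm (qh q powi t * z)"
    by (simp add: norm_mult norm_power norm_power_int mult_right_mono)
  then show ?thesis
    using param_beyond by simp
qed

lemma node_0: "node 0 = joukowski z"
  by (simp add: node_def)

lemma etaIt_node_0: "k \<le> int n \<Longrightarrow> etaIt q k g (node 0) = g (node k)"
  using one_less_norm_param[of 0] one_less_norm_param[of k] norm_q_less_1 q_nonzero
  by (simp add: node_def etaIt_joukowski)

lemma avg_node_0: "avg q k g (node 0) = (g (node (int k)) + g (node (- int k))) / 2"
  using one_less_norm_param[of 0] by (simp add: node_def avg_joukowski)

lemma q_ne_1: "q \<noteq> 1"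
  using norm_q_less_1 by auto

lemma node_succ_pred:
  "qh q * (qh q powi t * z) = qh q powi (t + 1) * z"
  "qh q powi t * z / qh q = qh q powi (t - 1) * z"
proof -
  show "qh q * (qh q powi t * z) = qh q powi (t + 1) * z"
    using qh_nonzero by (simp add: power_int_add_1' mult.assoc)
  have "qh q powi t = qh q * qh q powi (t - 1)"
    using qh_nonzero power_int_add_1'[of "qh q" "t - 1"] by simp
  then show "qh q powi t * z / qh q = qh q powi (t - 1) * z"
    using qh_nonzero by simp
qed

lemma AWD_node:
  "t < int n \<Longrightarrow>
     AWD q g (node t) = (g (node (t + 1)) - g (node (t - 1))) / (node (t + 1) - node (t - 1))"
  using AWD_joukowski[OF q_nonzero _ , of "qh q powi t * z" g] one_less_norm_param[of "t + 1"]
    norm_q_less_1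
  by (simp add: node_def node_succ_pred)

lemma node_gap_nonzero: "t \<le> int n \<Longrightarrow> node (t + 1) - node (t - 1) \<noteq> 0"
  using joukowski_shift_diff_nonzero[OF q_nonzero q_ne_1 one_less_norm_param]
  by (auto simp: node_def node_succ_pred)

lemma prod_inverse_etaIt_gaps_node_0:
  "(\<Prod>i=1..n. \<Prod>j=1..i. -1 / (etaIt q (int i - 2 * int j + 2) (\<lambda>t. t) (node 0)
                                - etaIt q (int i - 2 * int j) (\<lambda>t. t) (node 0)))
     = inverse (\<Prod>i=1..n. \<Prod>j=1..i. - (node (int i - 2 * int j + 2) - node (int i - 2 * int j)))"
proof -
  have "(\<Prod>i=1..n. \<Prod>j=1..i. -1 / (etaIt q (int i - 2 * int j + 2) (\<lambda>t. t) (node 0)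
                                - etaIt q (int i - 2 * int j) (\<lambda>t. t) (node 0)))
      = (\<Prod>i=1..n. \<Prod>j=1..i. inverse (- (node (int i - 2 * int j + 2) - node (int i - 2 * int j))))"
    by (intro prod.cong refl) (auto simp: etaIt_node_0 divide_inverse simp flip: inverse_minus_eq)
  then show ?thesis
    by (simp only: prod_inversef[unfolded comp_def])
qed

lemma prod_node_gaps_nonzero:
  "(\<Prod>i=1..n. \<Prod>j=1..i. - (node (int i - 2 * int j + 2) - node (int i - 2 * int j))) \<noteq> 0"
proof -
  have "node (int i - 2 * int j + 2) - node (int i - 2 * int j) \<noteq> 0" if "i \<le> n" and "1 \<le> j" for i j
  proof -
    have "int i - 2 * int j + 1 \<le> int n"
      using that by simp
    from node_gap_nonzero[OF this] show ?thesis
      by (simp add: add.assoc)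
  qed
  then show ?thesis
    by (simp add: prod_zero_iff) (metis atLeastAtMost_iff)
qed

lemma divided_difference_table_AWDpow:
  "divided_difference_table n (\<lambda>i t j. AWDpow q i (f j) (node t)) (\<lambda>t. node (t + 1) - node (t - 1))"
proof
  fix i t
  assume "i < n" and t: "\<bar>t\<bar> < int n"
  show "(\<lambda>j. AWDpow q i (f j) (node (t - 1)))
      = (\<lambda>j. AWDpow q i (f j) (node (t + 1))
               - (node (t + 1) - node (t - 1)) * AWDpow q (Suc i) (f j) (node t))"
    using t node_gap_nonzero[of t] by (auto simp: AWDpow_def AWD_node)
qed

end

locale askey_wilson_rows = askey_wilson_nodes +
  fixes f :: "nat \<Rightarrow> complex \<Rightarrow> complex"

sublocale askey_wilson_rows \<subseteq> table: divided_difference_table n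
  "\<lambda>i t j. AWDpow q i (f j) (node t)" "\<lambda>t. node (t + 1) - node (t - 1)"
  by (rule divided_difference_table_AWDpow)

context askey_wilson_rows
begin

lemma AWW_node_0: "AWW q n f (node 0) = det_of_rows (Suc n) table.top_row"
proof -
  have "AWW q n f (node 0) = det_of_rows (Suc n) (\<lambda>i j.
      1 / 2 * AWDpow q i (f j) (node (int n - int i))
      + 1 / 2 * AWDpow q i (f j) (node (- (int n - int i))))"
    unfolding AWW_def det_of_rows_def
    by (intro arg_cong[where f = det] eq_matI) (auto simp: avg_node_0 of_nat_diff)
  also have "\<dots> = det_of_rows (Suc n) table.top_row"
    by (rule table.det_affine_admissible_rows)
      (auto simp: table.admissible_shifts_def intro!: exI[of _ 0] exI[of _ "n - i" for i])
  finally show ?thesis .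
qed

lemma det_etaIt_AWDpow_node_0:
  assumes "\<forall>i<n. \<delta> i = 1 \<or> \<delta> i = -1"
  shows "det (mat (n+1) (n+1) (\<lambda>(i,j). etaIt q (if i < n then \<delta> i * int (n - i) else 0)
                                           (AWDpow q i (f j)) (node 0)))
           = det_of_rows (Suc n) table.top_row"
proof -
  define s where "s i = (if i < n then \<delta> i * int (n - i) else 0)" for i
  have "s i \<le> int n" for i
    using assms unfolding s_def by auto
  then have "det (mat (n+1) (n+1) (\<lambda>(i,j). etaIt q (s i) (AWDpow q i (f j)) (node 0)))
      = det_of_rows (Suc n) (\<lambda>i j. AWDpow q i (f j) (node (s i)))"
    unfolding det_of_rows_def by (intro arg_cong[where f = det] eq_matI) (auto simp: etaIt_node_0)
  also have "\<dots> = det_of_rows (Suc n) table.top_row"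
  proof (rule table.det_admissible_rows)
    show "\<forall>i\<le>n. s i \<in> table.admissible_shifts i"
      using assms unfolding s_def table.admissible_shifts_def
      by (force intro: exI[of _ 0] exI[of _ "n - i" for i])
  qed
  finally show ?thesis
    by (simp only: s_def)
qed

lemma det_etaIt_node_0:
  "det (mat (n+1) (n+1) (\<lambda>(i,j). etaIt q (int n - 2 * int i) (f j) (node 0)))
     = (\<Prod>m=1..n. \<Prod>j=1..m. - (node (int m - 2 * int j + 2) - node (int m - 2 * int j)))
       * det_of_rows (Suc n) table.top_row"
proof -
  have "det (mat (n+1) (n+1) (\<lambda>(i,j). etaIt q (int n - 2 * int i) (f j) (node 0)))
      = det_of_rows (Suc n) (\<lambda>i j. AWDpow q 0 (f j) (node (int n - 2 * int i)))"
    unfolding det_of_rows_def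
    by (intro arg_cong[where f = det] eq_matI) (auto simp: etaIt_node_0 AWDpow_def)
  also have "\<dots> = (\<Prod>m=1..n. \<Prod>j=1..m.
                        - (node (int m - 2 * int j + 1 + 1) - node (int m - 2 * int j + 1 - 1)))
      * det_of_rows (Suc n) table.top_row"
    by (rule table.det_shifted_rows)
  finally show ?thesis
    by (simp add: add.assoc)
qed

end

theorem proposition4p2:
  fixes q :: complex and n :: nat and f :: "nat \<Rightarrow> complex \<Rightarrow> complex"
    and x :: complex and \<delta> :: "nat \<Rightarrow> int"
  assumes "0 < norm q" and "norm q < 1"
    and "\<forall>j\<le>n. f j meromorphic_on UNIV"
    and "norm x > RR n q"
    and "\<forall>i<n. \<delta> i = 1 \<or> \<delta> i = -1"
  shows "AWW q n f x
           = det (mat (n+1) (n+1) (\<lambda>(i,j). etaIt q (if i < n then \<delta> i * int (n - i) else 0)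
                                               (AWDpow q i (f j)) x))
         \<and> AWW q n f x
           = det (mat (n+1) (n+1) (\<lambda>(i,j). etaIt q (int n - 2 * int i) (f j) x)) *
             (\<Prod>i=1..n. \<Prod>j=1..i. -1 / (etaIt q (int i - 2 * int j + 2) (\<lambda>t. t) x
                                        - etaIt q (int i - 2 * int j) (\<lambda>t. t) x))"
proof -
  from assms(1,2,4) obtain z where z: "1 < norm (qh q ^ n * z)" and x: "x = joukowski z"
    by (auto elim: joukowski_param_beyond_RR)
  interpret askey_wilson_rows q n z f
    using assms(1,2) z by unfold_locales auto
  have x_node: "x = node 0"
    unfolding x node_0 ..
  show ?thesis
    unfolding x_node AWW_node_0 det_etaIt_AWDpow_node_0[OF assms(5)] det_etaIt_node_0
      prod_inverse_etaIt_gaps_node_0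
    using prod_node_gaps_nonzero by simp
qed

end
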